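(* Let $m,k\ge 1$ be integers, and let $N'_{m,k}(\alpha,\beta)=\sum_T\mathrm{wt}(T)$, summed over all Condensed Catalan tableaux $T$ of size $(k,k+m)$ whose shape $\lambda=(\lambda_1,\ldots,\lambda_k)$ satisfies $\lambda_1=m$ and $\lambda_k\ge 1$ (i.e. exactly $k$ nonzero rows and first row of length $m$). Then $$N'_{m,k}(\alpha,\beta)=\alpha^k\beta^m\sum_{\ell=0}^{k}\sum_{j=0}^{m}\alpha^j\beta^\ell\left(\binom{m+\ell-2+\delta_{jm}}{m-1}\binom{k+j-2+\delta_{\ell k}}{k-1}-\binom{m+\ell-2+\delta_{jm}}{m}\binom{k+j-2+\delta_{\ell k}}{k}\right),$$ where $\delta_{rs}$ is the Kronecker delta.
   Context: Binomial coefficients are $\binom{a}{b}=a(a-1)\cdots(a-b+1)/b!$ for integers $a$ and $b\ge 0$, and $\binom{a}{b}=0$ for $b<0$. For a partition $\lambda=(\lambda_1\ge\cdots\ge\lambda_k\ge 0)$ with $\lambda_1\le n-k$, the Young diagram (English convention) consists of boxes $(r,c)$, $1\le r\le k$, $1\le c\le\lambda_r$ (row 1 on top, column 1 leftmost), viewed inside a $k\times(n-k)$ rectangle. A Condensed Catalan tableau of size $(k,n)$ and shape $\lambda$ is an assignment to each box of one of $\alpha$, $\beta$, or empty, such that: (ii) if box $(r,c)$ contains $\beta$, every box $(r,c')$ with $c'<c$ is empty; (iii) if box $(r,c)$ contains $\alpha$, every box $(r',c)$ with $r'<r$ is empty; (iv) every box $(r,c)$ such that there is no $\alpha$ in any box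 $(r',c)$ with $r'>r$ and no $\beta$ in any box $(r,c')$ with $c'>c$ contains $\alpha$ or $\beta$. Its weight is $\mathrm{wt}(T)=\alpha^{k+a}\beta^{n-k+b}$, where $a$ and $b$ are the numbers of $\alpha$'s and $\beta$'s in the filling. *)

theory Defs
  imports Complex_Main
begin

datatype cell = CA | CB | CE  (* alpha, beta, empty *)

definition is_partition :: "nat \<Rightarrow> nat \<Rightarrow> (nat \<Rightarrow> nat) \<Rightarrow> bool" where
  "is_partition k n lam \<longleftrightarrow>
     k \<le> n \<and>
     (\<forall>r. (r < 1 \<or> k < r) \<longrightarrow> lam r = 0) \<and>
     (\<forall>r. 1 \<le> r \<and> r < k \<longrightarrow> lam (Suc r) \<le> lam r) \<and>
     lam 1 \<le> n - k"

text \<open>Box (r,c) lies in the Young diagram (English convention).\<close>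
definition in_diag :: "(nat \<Rightarrow> nat) \<Rightarrow> nat \<Rightarrow> nat \<Rightarrow> bool" where
  "in_diag lam r c \<longleftrightarrow> 1 \<le> r \<and> 1 \<le> c \<and> c \<le> lam r"

definition is_cct :: "nat \<Rightarrow> nat \<Rightarrow> (nat \<Rightarrow> nat) \<Rightarrow> (nat \<times> nat \<Rightarrow> cell) \<Rightarrow> bool" where
  "is_cct k n lam T \<longleftrightarrow>
     is_partition k n lam \<and>
     (\<forall>r c. \<not> in_diag lam r c \<longrightarrow> T (r, c) = CE) \<and>
     (\<forall>r c c'. in_diag lam r c \<and> T (r, c) = CB \<and> 1 \<le> c' \<and> c' < c \<longrightarrow> T (r, c') = CE) \<and>
     (\<forall>r c r'. in_diag lam r c \<and> T (r, c) = CA \<and> 1 \<le> r' \<and> r' < r \<longrightarrow> T (r', c) = CE) \<and>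
     (\<forall>r c. in_diag lam r c \<and>
        \<not> (\<exists>r'. r < r' \<and> in_diag lam r' c \<and> T (r', c) = CA) \<and>
        \<not> (\<exists>c'. c < c' \<and> in_diag lam r c' \<and> T (r, c') = CB)
        \<longrightarrow> T (r, c) = CA \<or> T (r, c) = CB)"

definition num_cell :: "cell \<Rightarrow> (nat \<times> nat \<Rightarrow> cell) \<Rightarrow> nat" where
  "num_cell x T = card {p. T p = x}"

definition cct_wt :: "nat \<Rightarrow> nat \<Rightarrow> real \<Rightarrow> real \<Rightarrow> (nat \<times> nat \<Rightarrow> cell) \<Rightarrow> real" where
  "cct_wt k n \<alpha> \<beta> T = \<alpha> ^ (k + num_cell CA T) * \<beta> ^ (n - k + num_cell CB T)"

definition Nprime :: "nat \<Rightarrow> nat \<Rightarrow> real \<Rightarrow> real \<Rightarrow> real" where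
  "Nprime m k \<alpha> \<beta> =
     (\<Sum>(lam, T) \<in> {(lam, T). is_cct k (k + m) lam T \<and> lam 1 = m \<and> 1 \<le> lam k}.
        cct_wt k (k + m) \<alpha> \<beta> T)"

definition kdelta :: "nat \<Rightarrow> nat \<Rightarrow> int" where
  "kdelta r s = (if r = s then 1 else 0)"

end

(*
  Removing the top row of a tableau with k + 1 nonempty rows leaves a tableau with k nonempty
  rows whose first row is not longer than the removed one, of length E say.  Conversely, the top
  row is determined by the column b of its beta (b = 0 if there is none): it carries alpha
  exactly in those columns to the right of b that contain no alpha below.  As b varies, the
  number of these columns takes each value 0, ..., E - #alpha once, and a beta is present
  unless the value is maximal.  Hence the beta-polynomial F k E J of the tableaux with k rows,
  first row E and J entries alpha satisfies
    F (k + 1) E J = beta^[J < E] * sum_{E' <= E, J' <= J} F k E' J'    (1 <= E, J <= E).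
  This recurrence is solved by exhibiting the beta-coefficients of the prefix sums as
  differences C(x, e) C(y, k) - C(x, e + 1) C(y, k + 1) and checking the inclusion-exclusion
  recurrence of prefix sums, which is Pascal's rule applied to both factors.
*)

theory Submission
  imports Defs
begin

section \<open>Determinants of binomial coefficients\<close>

lemma diff_mult_increments:
  fixes a0 b0 c0 d0 da db dc dd :: "'a::comm_ring"
  assumes "a1 = a0 + da" "b1 = b0 + db" "c1 = c0 + dc" "d1 = d0 + dd"
  shows "a1 * b1 - c1 * d1
    = (a0 * b1 - c0 * d1) + (a1 * b0 - c1 * d0) - (a0 * b0 - c0 * d0) + (da * db - dc * dd)"
  using assms by (simp add: algebra_simps)

definition binom_det :: "nat \<Rightarrow> nat \<Rightarrow> nat \<Rightarrow> nat \<Rightarrow> int" where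
  "binom_det x e y k = int (x choose e) * int (y choose k) - int (x choose Suc e) * int (y choose Suc k)"

lemma binom_det_pascal:
  "binom_det (Suc x) (Suc e) (Suc y) (Suc k) =
     binom_det x e (Suc y) (Suc k) + binom_det (Suc x) (Suc e) y (Suc k) - binom_det x e y (Suc k)
     + binom_det x (Suc e) y k"
  unfolding binom_det_def
  by (rule diff_mult_increments) simp_all

lemma binom_det_pascal_right:
  "binom_det x e (Suc y) (Suc k) = binom_det x e y (Suc k) + binom_det x e y k"
  unfolding binom_det_def by (simp add: algebra_simps)

lemma binom_det_self_eq_0:
  assumes "x = e + Suc k"
  shows "binom_det x e x k = 0"
proof -
  have "x choose e = x choose Suc k" "x choose Suc e = x choose k"
    using assms binomial_symmetric[of e x] binomial_symmetric[of k x] by simp_all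
  then show ?thesis by (simp add: binom_det_def)
qed

lemma binom_det_diag:
  assumes "x = e + k"
  shows "binom_det x e (Suc x) k = binom_det x e x k"
proof (cases k)
  case 0
  then show ?thesis using assms by (simp add: binom_det_def)
next
  case (Suc k')
  then show ?thesis
    using assms binom_det_pascal_right[of x e x k'] binom_det_self_eq_0[of x e k'] by simp
qed

lemma binom_det_gchoose:
  "real_of_int (binom_det x e y k) =
     (real x gchoose e) * (real y gchoose k) - (real x gchoose Suc e) * (real y gchoose Suc k)"
  by (simp add: binom_det_def binomial_gbinomial)

section \<open>Solving the row recurrence\<close>

lemma prefix_sum_Suc_Suc:
  fixes f :: "nat \<Rightarrow> nat \<Rightarrow> 'a::ab_group_add"
  shows "(\<Sum>E'\<le>Suc e. \<Sum>J'\<le>Suc j. f E' J') = (\<Sum>E'\<le>e. \<Sum>J'\<le>Suc j. f E' J')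
     + (\<Sum>E'\<le>Suc e. \<Sum>J'\<le>j. f E' J') - (\<Sum>E'\<le>e. \<Sum>J'\<le>j. f E' J') + f (Suc e) (Suc j)"
  by (simp add: sum.distrib)

text \<open>The recurrence satisfied by the tableau polynomials, see \<open>cct_beta_sum_eq_beta_poly\<close>.\<close>

fun beta_poly :: "real \<Rightarrow> nat \<Rightarrow> nat \<Rightarrow> nat \<Rightarrow> real" where
  "beta_poly \<beta> 0 E J = (if E = 0 \<and> J = 0 then 1 else 0)"
| "beta_poly \<beta> (Suc k) E J = (if 1 \<le> E \<and> J \<le> E
     then \<beta> ^ (if J < E then 1 else 0) * (\<Sum>E'\<le>E. \<Sum>J'\<le>J. beta_poly \<beta> k E' J') else 0)"

text \<open>The coefficient of \<open>\<beta> ^ l\<close> (for \<open>l \<le> k\<close>) in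
  \<open>\<Sum>E'\<le>E. \<Sum>J'\<le>J. beta_poly \<beta> k E' J'\<close>, and that in \<open>beta_poly \<beta> (Suc k) E J\<close>.\<close>

definition prefix_coeff :: "nat \<Rightarrow> nat \<Rightarrow> nat \<Rightarrow> nat \<Rightarrow> int" where
  "prefix_coeff k E J l = (if E = 0 then (if k = 0 \<and> l = 0 then 1 else 0)
     else binom_det (E - 1 + l) (E - 1) (k + min J E + (if l = k then 1 else 0) - 1) k)"

definition row_coeff :: "nat \<Rightarrow> nat \<Rightarrow> nat \<Rightarrow> nat \<Rightarrow> int" where
  "row_coeff k E J l = (if 1 \<le> E \<and> J < E then (if l = 0 then 0 else prefix_coeff k E J (l - 1))
     else if 1 \<le> E \<and> J = E \<and> l \<le> k then prefix_coeff k E J l else 0)"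

lemma prefix_coeff_Suc:
  "prefix_coeff (Suc k) (Suc e) J l =
     binom_det (e + l) e (k + min J (Suc e) + (if l = Suc k then 1 else 0)) (Suc k)"
  by (simp add: prefix_coeff_def)

lemma prefix_coeff_rec_0:
  assumes "l \<le> Suc k"
  shows "prefix_coeff (Suc k) (Suc e) 0 l = prefix_coeff (Suc k) e 0 l + row_coeff k (Suc e) 0 l"
proof (cases "l = Suc k")
  case True
  then show ?thesis
    by (cases e) (simp_all add: prefix_coeff_def row_coeff_def binom_det_def binomial_eq_0)
next
  case False
  then show ?thesis using assms
    by (cases e; cases l) (simp_all add: prefix_coeff_def row_coeff_def binom_det_def binomial_eq_0)
qed

lemma prefix_coeff_rec_below_diag:
  assumes "j < e"
  shows "prefix_coeff (Suc k) (Suc e) (Suc j) l = prefix_coeff (Suc k) e (Suc j) l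
     + prefix_coeff (Suc k) (Suc e) j l - prefix_coeff (Suc k) e j l + row_coeff k (Suc e) (Suc j) l"
proof -
  obtain e' where e: "e = Suc e'" using assms by (cases e) auto
  define y where "y = k + j + (if l = Suc k then 1 else 0)"
  have "binom_det e' (Suc e') y k = 0" if "l = 0"
    using that by (simp add: binom_det_def binomial_eq_0)
  then have "row_coeff k (Suc e) (Suc j) l = binom_det (e' + l) (Suc e') y k"
    using assms e by (cases l) (simp_all add: row_coeff_def prefix_coeff_def y_def)
  moreover have "prefix_coeff (Suc k) (Suc e) (Suc j) l = binom_det (Suc (e' + l)) (Suc e') (Suc y) (Suc k)"
    "prefix_coeff (Suc k) e (Suc j) l = binom_det (e' + l) e' (Suc y) (Suc k)"
    "prefix_coeff (Suc k) (Suc e) j l = binom_det (Suc (e' + l)) (Suc e') y (Suc k)"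
    "prefix_coeff (Suc k) e j l = binom_det (e' + l) e' y (Suc k)"
    using assms e by (simp_all add: prefix_coeff_Suc y_def)
  ultimately show ?thesis by (simp add: binom_det_pascal)
qed

lemma prefix_coeff_rec_diag:
  assumes "l \<le> Suc k"
  shows "prefix_coeff (Suc k) (Suc e) (Suc e) l = prefix_coeff (Suc k) e (Suc e) l
     + prefix_coeff (Suc k) (Suc e) e l - prefix_coeff (Suc k) e e l + row_coeff k (Suc e) (Suc e) l"
proof -
  have "prefix_coeff (Suc k) e (Suc e) l = prefix_coeff (Suc k) e e l"
    by (simp add: prefix_coeff_def)
  moreover consider "l < k" | "l = k" | "l = Suc k" using assms by linarith
  then have "prefix_coeff (Suc k) (Suc e) (Suc e) l = prefix_coeff (Suc k) (Suc e) e l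
      + row_coeff k (Suc e) (Suc e) l"
  proof cases
    case 1
    then show ?thesis by (simp add: prefix_coeff_def row_coeff_def binom_det_pascal_right)
  next
    case 2
    then show ?thesis
      using binom_det_diag[of "e + k" e k]
      by (simp add: prefix_coeff_def row_coeff_def binom_det_pascal_right algebra_simps)
  next
    case 3
    then show ?thesis
      using binom_det_diag[of "e + Suc k" e "Suc k"]
      by (simp add: prefix_coeff_def row_coeff_def algebra_simps)
  qed
  ultimately show ?thesis by simp
qed

lemma prefix_coeff_rec:
  assumes "l \<le> Suc k"
  shows "prefix_coeff (Suc k) (Suc e) (Suc j) l = prefix_coeff (Suc k) e (Suc j) l
     + prefix_coeff (Suc k) (Suc e) j l - prefix_coeff (Suc k) e j l + row_coeff k (Suc e) (Suc j) l"
proof -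
  consider "j < e" | "j = e" | "e < j" by linarith
  then show ?thesis
  proof cases
    case 1
    then show ?thesis by (rule prefix_coeff_rec_below_diag)
  next
    case 2
    then show ?thesis using prefix_coeff_rec_diag[OF assms] by simp
  next
    case 3
    then show ?thesis by (simp add: prefix_coeff_def row_coeff_def)
  qed
qed

lemma beta_poly_Suc_eq_row_coeff:
  assumes "(\<Sum>E'\<le>E. \<Sum>J'\<le>J. beta_poly \<beta> k E' J') = (\<Sum>l\<le>k. \<beta> ^ l * prefix_coeff k E J l)"
  shows "beta_poly \<beta> (Suc k) E J = (\<Sum>l\<le>Suc k. \<beta> ^ l * row_coeff k E J l)"
proof -
  consider "1 \<le> E \<and> J < E" | "1 \<le> E \<and> J = E" | "\<not> (1 \<le> E \<and> J \<le> E)" by linarith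
  then show ?thesis
  proof cases
    case 1
    have "beta_poly \<beta> (Suc k) E J = (\<Sum>l\<le>k. \<beta> ^ Suc l * prefix_coeff k E J l)"
      using assms 1 by (simp add: sum_distrib_left mult.assoc)
    also have "\<dots> = (\<Sum>l\<le>Suc k. \<beta> ^ l * (if l = 0 then 0 else prefix_coeff k E J (l - 1)))"
      by (subst sum.atMost_Suc_shift) simp
    also have "\<dots> = (\<Sum>l\<le>Suc k. \<beta> ^ l * row_coeff k E J l)"
      using 1 by (simp add: row_coeff_def)
    finally show ?thesis .
  next
    case 2
    then show ?thesis using assms by (simp add: sum.atMost_Suc row_coeff_def)
  next
    case 3
    then show ?thesis by (auto simp: row_coeff_def)
  qed
qed

lemma beta_poly_prefix_sum:
  "(\<Sum>E'\<le>E. \<Sum>J'\<le>J. beta_poly \<beta> k E' J') = (\<Sum>l\<le>k. \<beta> ^ l * prefix_coeff k E J l)"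
proof (induction k arbitrary: E J)
  case 0
  have "(\<Sum>E'\<le>E. \<Sum>J'\<le>J. beta_poly \<beta> 0 E' J') = (\<Sum>E'\<le>E. if E' = 0 then 1 else 0)"
    by (intro sum.cong) auto
  then have "(\<Sum>E'\<le>E. \<Sum>J'\<le>J. beta_poly \<beta> 0 E' J') = 1"
    by simp
  then show ?case by (simp add: prefix_coeff_def binom_det_def)
next
  case (Suc k)
  note row = beta_poly_Suc_eq_row_coeff[OF Suc.IH]
  show ?case
  proof (induction E arbitrary: J)
    case 0
    then show ?case by (simp add: prefix_coeff_def)
  next
    case (Suc e)
    note IH_E = Suc.IH
    show ?case
    proof (induction J)
      case 0
      then show ?case
        using IH_E[of 0] row[of "Suc e" 0]
        by (simp add: prefix_coeff_rec_0 sum.distrib algebra_simps del: beta_poly.simps)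
    next
      case (Suc j)
      then show ?case
        using IH_E[of "Suc j"] IH_E[of j] Suc.IH row[of "Suc e" "Suc j"]
        by (simp add: prefix_sum_Suc_Suc prefix_coeff_rec sum.distrib sum_subtractf algebra_simps
              del: beta_poly.simps)
    qed
  qed
qed

lemma gbinomial_det_pred_eq_0:
  assumes "J \<le> e"
  shows "(real_of_int (int e - 1) gchoose e) * (real_of_int (int k + int J - 1) gchoose k)
    - (real_of_int (int e - 1) gchoose Suc e) * (real_of_int (int k + int J - 1) gchoose Suc k) = 0"
proof (cases e)
  case 0
  have "real_of_int (-1) gchoose i = (-1) ^ i" for i
    using gbinomial_minus[of "1::real" i] by (simp add: binomial_gbinomial[symmetric])
  then show ?thesis using 0 assms
    by (cases k) (simp_all add: binomial_gbinomial[symmetric] binomial_eq_0)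
next
  case (Suc e')
  then have "real_of_int (int e - 1) = real e'" by simp
  then show ?thesis using Suc by (simp add: binomial_gbinomial[symmetric] binomial_eq_0)
qed

lemma row_coeff_gchoose:
  assumes "J \<le> Suc e" "l \<le> Suc k"
  shows "real_of_int (row_coeff k (Suc e) J l) =
    (real_of_int (int (Suc e) + int l - 2 + kdelta J (Suc e)) gchoose e) *
    (real_of_int (int (Suc k) + int J - 2 + kdelta l (Suc k)) gchoose k)
  - (real_of_int (int (Suc e) + int l - 2 + kdelta J (Suc e)) gchoose Suc e) *
    (real_of_int (int (Suc k) + int J - 2 + kdelta l (Suc k)) gchoose Suc k)"
proof -
  consider "J < Suc e" "l = 0" | l' where "J < Suc e" "l = Suc l'"
    | "J = Suc e" "l \<le> k" | "J = Suc e" "l = Suc k"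
    using assms by (cases l) force+
  then show ?thesis
  proof cases
    case 1
    have "int (Suc e) + int l - 2 + kdelta J (Suc e) = int e - 1"
      "int (Suc k) + int J - 2 + kdelta l (Suc k) = int k + int J - 1"
      using 1 by (simp_all add: kdelta_def)
    moreover have "J \<le> e" using 1 by simp
    ultimately show ?thesis using 1 gbinomial_det_pred_eq_0 by (simp add: row_coeff_def)
  next
    case 2
    have "int (Suc e) + int l - 2 + kdelta J (Suc e) = int (e + l')"
      "int (Suc k) + int J - 2 + kdelta l (Suc k) = int (k + J + (if l' = k then 1 else 0) - 1)"
      using 2 assms by (auto simp: kdelta_def)
    then show ?thesis
      using 2 by (simp add: row_coeff_def prefix_coeff_def binom_det_gchoose add.commute)
  next
    case 3
    have "int (Suc e) + int l - 2 + kdelta J (Suc e) = int (e + l)"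
      "int (Suc k) + int J - 2 + kdelta l (Suc k) = int (e + k)"
      using 3 by (simp_all add: kdelta_def)
    moreover have "prefix_coeff k (Suc e) (Suc e) l = binom_det (e + l) e (e + k) k"
      using 3 binom_det_diag[of "e + k" e k]
      by (cases "l = k") (simp_all add: prefix_coeff_def algebra_simps)
    ultimately show ?thesis using 3 by (simp add: row_coeff_def binom_det_gchoose add.commute)
  next
    case 4
    have "int (Suc e) + int l - 2 + kdelta J (Suc e) = int (e + Suc k)"
      "int (Suc k) + int J - 2 + kdelta l (Suc k) = int (e + Suc k)"
      using 4 by (simp_all add: kdelta_def)
    then show ?thesis
      using 4 binom_det_self_eq_0[of "e + Suc k" e k]
      by (simp add: row_coeff_def binom_det_gchoose[symmetric] del: of_nat_Suc)
  qed
qed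

lemma beta_poly_closed_form:
  assumes "1 \<le> k" "1 \<le> m" "J \<le> m"
  shows "beta_poly \<beta> k m J = (\<Sum>l\<le>k. \<beta> ^ l *
      ((real_of_int (int m + int l - 2 + kdelta J m) gchoose (m - 1)) *
       (real_of_int (int k + int J - 2 + kdelta l k) gchoose (k - 1))
     - (real_of_int (int m + int l - 2 + kdelta J m) gchoose m) *
       (real_of_int (int k + int J - 2 + kdelta l k) gchoose k)))"
    (is "_ = (\<Sum>l\<le>k. ?term l)")
proof -
  obtain k' e where k: "k = Suc k'" and m: "m = Suc e" using assms by (cases k; cases m) auto
  have "beta_poly \<beta> k m J = (\<Sum>l\<le>k. \<beta> ^ l * row_coeff k' m J l)"
    unfolding k by (rule beta_poly_Suc_eq_row_coeff[OF beta_poly_prefix_sum])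
  also have "\<dots> = (\<Sum>l\<le>k. ?term l)"
  proof (intro sum.cong refl)
    fix l assume "l \<in> {..k}"
    then show "\<beta> ^ l * row_coeff k' m J l = ?term l"
      using row_coeff_gchoose[of J e l k'] assms(3) k m by simp
  qed
  finally show ?thesis .
qed

section \<open>Tableaux with exactly k nonempty rows\<close>

definition partition_of_length :: "nat \<Rightarrow> (nat \<Rightarrow> nat) \<Rightarrow> bool" where
  "partition_of_length k lam \<longleftrightarrow>
     (\<forall>r. lam r = 0 \<longleftrightarrow> r = 0 \<or> k < r) \<and> (\<forall>r. 1 \<le> r \<and> r < k \<longrightarrow> lam (Suc r) \<le> lam r)"

text \<open>Conditions (ii)--(iv) of \<open>is_cct\<close>, simplified using that the filling is empty
  outside the diagram (\<open>is_cct_iff\<close>).\<close>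

definition cct_filling :: "(nat \<Rightarrow> nat) \<Rightarrow> (nat \<times> nat \<Rightarrow> cell) \<Rightarrow> bool" where
  "cct_filling lam T \<longleftrightarrow>
     (\<forall>r c. T (r, c) \<noteq> CE \<longrightarrow> in_diag lam r c) \<and>
     (\<forall>r c c'. T (r, c) = CB \<and> c' < c \<longrightarrow> T (r, c') = CE) \<and>
     (\<forall>r c r'. T (r, c) = CA \<and> r' < r \<longrightarrow> T (r', c) = CE) \<and>
     (\<forall>r c. in_diag lam r c \<and> (\<forall>r' > r. T (r', c) \<noteq> CA) \<and> (\<forall>c' > c. T (r, c') \<noteq> CB)
        \<longrightarrow> T (r, c) \<noteq> CE)"

text \<open>The size \<open>n\<close> of \<open>is_cct\<close> only enters through \<open>lam 1 \<le> n - k\<close> and is dropped.\<close>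

definition cct :: "nat \<Rightarrow> (nat \<Rightarrow> nat) \<Rightarrow> (nat \<times> nat \<Rightarrow> cell) \<Rightarrow> bool" where
  "cct k lam T \<longleftrightarrow> partition_of_length k lam \<and> cct_filling lam T"

lemma decreasing_antimono:
  assumes "\<forall>r. 1 \<le> r \<and> r < k \<longrightarrow> lam (Suc r) \<le> (lam r :: nat)" "1 \<le> r" "r \<le> r'" "r' \<le> k"
  shows "lam r' \<le> lam r"
  using assms(3,4)
proof (induction r' rule: dec_induct)
  case (step n)
  then have "lam (Suc n) \<le> lam n" using assms(1,2) by simp
  then show ?case using step by simp
qed simp

lemma
  assumes "partition_of_length k lam"
  shows partition_of_length_eq_0: "r = 0 \<or> k < r \<Longrightarrow> lam r = 0"
    and partition_of_length_pos: "1 \<le> r \<Longrightarrow> r \<le> k \<Longrightarrow> lam r \<noteq> 0"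
    and partition_of_length_decreasing: "1 \<le> r \<Longrightarrow> r < k \<Longrightarrow> lam (Suc r) \<le> lam r"
  using assms unfolding partition_of_length_def by auto

lemma partition_of_length_le_first:
  assumes "partition_of_length k lam"
  shows "lam r \<le> lam 1"
proof (cases "1 \<le> r \<and> r \<le> k")
  case True
  then show ?thesis
    using assms decreasing_antimono[of k lam 1 r] by (simp add: partition_of_length_def)
next
  case False
  then show ?thesis using partition_of_length_eq_0[OF assms, of r] by auto
qed

lemma
  assumes "cct_filling lam T"
  shows cct_filling_in_diag: "T (r, c) \<noteq> CE \<Longrightarrow> in_diag lam r c"
    and cct_filling_beta: "T (r, c) = CB \<Longrightarrow> c' < c \<Longrightarrow> T (r, c') = CE"
    and cct_filling_alpha: "T (r, c) = CA \<Longrightarrow> r' < r \<Longrightarrow> T (r', c) = CE"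
    and cct_filling_cover: "in_diag lam r c \<Longrightarrow> (\<And>r'. r < r' \<Longrightarrow> T (r', c) \<noteq> CA) \<Longrightarrow>
      (\<And>c'. c < c' \<Longrightarrow> T (r, c') \<noteq> CB) \<Longrightarrow> T (r, c) \<noteq> CE"
  using assms unfolding cct_filling_def by blast+

lemma cct_fillingI:
  assumes "\<And>r c. T (r, c) \<noteq> CE \<Longrightarrow> in_diag lam r c"
    and "\<And>r c c'. T (r, c) = CB \<Longrightarrow> c' < c \<Longrightarrow> T (r, c') = CE"
    and "\<And>r c r'. T (r, c) = CA \<Longrightarrow> r' < r \<Longrightarrow> T (r', c) = CE"
    and "\<And>r c. in_diag lam r c \<Longrightarrow> (\<And>r'. r < r' \<Longrightarrow> T (r', c) \<noteq> CA) \<Longrightarrow>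
      (\<And>c'. c < c' \<Longrightarrow> T (r, c') \<noteq> CB) \<Longrightarrow> T (r, c) \<noteq> CE"
  shows "cct_filling lam T"
  using assms unfolding cct_filling_def by blast

lemma cct_filling_row_0: "cct_filling lam T \<Longrightarrow> T (0, c) = CE"
  using cct_filling_in_diag[of lam T 0 c] by (auto simp: in_diag_def)

lemma cct_bounds:
  assumes "cct k lam T" "T (r, c) \<noteq> CE"
  shows "1 \<le> r \<and> r \<le> k \<and> 1 \<le> c \<and> c \<le> lam 1"
proof -
  have part: "partition_of_length k lam" and diag: "in_diag lam r c"
    using assms cct_filling_in_diag by (auto simp: cct_def)
  have "r \<le> k"
  proof (rule ccontr)
    assume "\<not> r \<le> k"
    then show False using diag partition_of_length_eq_0[OF part, of r] by (simp add: in_diag_def)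
  qed
  then show ?thesis
    using diag partition_of_length_le_first[OF part, of r] by (auto simp: in_diag_def)
qed

lemma cct_filling_if_is_cct:
  assumes "is_cct k n lam T"
  shows "cct_filling lam T"
proof -
  have outside: "\<And>r c. \<not> in_diag lam r c \<Longrightarrow> T (r, c) = CE"
    and beta: "\<And>r c c'. in_diag lam r c \<Longrightarrow> T (r, c) = CB \<Longrightarrow> 1 \<le> c' \<Longrightarrow> c' < c \<Longrightarrow>
        T (r, c') = CE"
    and alpha: "\<And>r c r'. in_diag lam r c \<Longrightarrow> T (r, c) = CA \<Longrightarrow> 1 \<le> r' \<Longrightarrow> r' < r \<Longrightarrow>
        T (r', c) = CE"
    and cover: "\<And>r c. in_diag lam r c \<Longrightarrow>
        \<not> (\<exists>r'. r < r' \<and> in_diag lam r' c \<and> T (r', c) = CA) \<Longrightarrow>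
        \<not> (\<exists>c'. c < c' \<and> in_diag lam r c' \<and> T (r, c') = CB) \<Longrightarrow> T (r, c) = CA \<or> T (r, c) = CB"
    using assms unfolding is_cct_def by blast+
  show ?thesis
  proof (rule cct_fillingI)
    fix r c assume "T (r, c) \<noteq> CE"
    then show "in_diag lam r c" using outside by blast
  next
    fix r c c' assume "T (r, c) = CB" "c' < c"
    then show "T (r, c') = CE"
      using beta[of r c c'] outside[of r c] outside[of r 0] by (cases "c' = 0") (auto simp: in_diag_def)
  next
    fix r c r' assume "T (r, c) = CA" "r' < r"
    then show "T (r', c) = CE"
      using alpha[of r c r'] outside[of r c] outside[of 0 c] by (cases "r' = 0") (auto simp: in_diag_def)
  next
    fix r c assume "in_diag lam r c" "\<And>r'. r < r' \<Longrightarrow> T (r', c) \<noteq> CA"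
      "\<And>c'. c < c' \<Longrightarrow> T (r, c') \<noteq> CB"
    then show "T (r, c) \<noteq> CE" using cover[of r c] by auto
  qed
qed

lemma is_cct_if_cct_filling:
  assumes "is_partition k n lam" and filling: "cct_filling lam T"
  shows "is_cct k n lam T"
proof -
  have "\<forall>r c. \<not> in_diag lam r c \<longrightarrow> T (r, c) = CE"
    using cct_filling_in_diag[OF filling] by blast
  moreover have "\<forall>r c c'. in_diag lam r c \<and> T (r, c) = CB \<and> 1 \<le> c' \<and> c' < c \<longrightarrow> T (r, c') = CE"
    using cct_filling_beta[OF filling] by blast
  moreover have "\<forall>r c r'. in_diag lam r c \<and> T (r, c) = CA \<and> 1 \<le> r' \<and> r' < r \<longrightarrow> T (r', c) = CE"
    using cct_filling_alpha[OF filling] by blast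
  moreover have "T (r, c) = CA \<or> T (r, c) = CB"
    if "in_diag lam r c" "\<not> (\<exists>r'. r < r' \<and> in_diag lam r' c \<and> T (r', c) = CA)"
      "\<not> (\<exists>c'. c < c' \<and> in_diag lam r c' \<and> T (r, c') = CB)" for r c
  proof -
    have "T (r, c) \<noteq> CE"
      using cct_filling_cover[OF filling that(1)] that(2,3) cct_filling_in_diag[OF filling]
      by (metis cell.distinct(1,3,5))
    then show ?thesis by (cases "T (r, c)") simp_all
  qed
  ultimately show "is_cct k n lam T" using assms(1) unfolding is_cct_def by blast
qed

lemma is_cct_iff: "is_cct k n lam T \<longleftrightarrow> is_partition k n lam \<and> cct_filling lam T"
proof -
  have "is_cct k n lam T \<Longrightarrow> is_partition k n lam"
    unfolding is_cct_def by (rule conjunct1)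
  then show ?thesis using cct_filling_if_is_cct is_cct_if_cct_filling by blast
qed

lemma is_partition_iff:
  assumes "1 \<le> k"
  shows "is_partition k n lam \<and> 1 \<le> lam k \<longleftrightarrow> partition_of_length k lam \<and> k \<le> n \<and> lam 1 \<le> n - k"
proof
  assume part: "is_partition k n lam \<and> 1 \<le> lam k"
  then have decr: "\<forall>r. 1 \<le> r \<and> r < k \<longrightarrow> lam (Suc r) \<le> lam r" by (simp add: is_partition_def)
  have "1 \<le> lam r" if "1 \<le> r" "r \<le> k" for r
    using decreasing_antimono[OF decr that] part by simp
  moreover have "lam r = 0" if "r = 0 \<or> k < r" for r
    using part that by (auto simp: is_partition_def)
  ultimately have "lam r = 0 \<longleftrightarrow> r = 0 \<or> k < r" for r
    by (metis not_le not_one_le_zero One_nat_def Suc_leI neq0_conv)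
  then show "partition_of_length k lam \<and> k \<le> n \<and> lam 1 \<le> n - k"
    using part by (simp add: partition_of_length_def is_partition_def)
next
  assume part: "partition_of_length k lam \<and> k \<le> n \<and> lam 1 \<le> n - k"
  then have "1 \<le> lam k" using partition_of_length_pos[of k lam k] assms by simp
  with part show "is_partition k n lam \<and> 1 \<le> lam k"
    by (auto simp: is_partition_def partition_of_length_def)
qed

section \<open>Removing and adding the top row\<close>

definition lower_shape :: "(nat \<Rightarrow> nat) \<Rightarrow> nat \<Rightarrow> nat" where
  "lower_shape lam = (\<lambda>r. if r = 0 then 0 else lam (Suc r))"

definition lower_filling :: "(nat \<times> nat \<Rightarrow> cell) \<Rightarrow> nat \<times> nat \<Rightarrow> cell" where
  "lower_filling T = (\<lambda>(r, c). if r = 0 then CE else T (Suc r, c))"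

definition free_columns :: "(nat \<times> nat \<Rightarrow> cell) \<Rightarrow> nat \<Rightarrow> nat set" where
  "free_columns T E = {c. 1 \<le> c \<and> c \<le> E \<and> (\<forall>r. T (r, c) \<noteq> CA)}"

text \<open>\<open>b = 0\<close> encodes a top row without \<open>\<beta>\<close>.\<close>

definition top_row :: "nat \<Rightarrow> (nat \<times> nat \<Rightarrow> cell) \<Rightarrow> nat \<Rightarrow> nat \<Rightarrow> cell" where
  "top_row E T b c = (if b \<noteq> 0 \<and> c = b then CB else if c \<in> free_columns T E \<and> b < c then CA else CE)"

definition add_row_shape :: "nat \<Rightarrow> (nat \<Rightarrow> nat) \<Rightarrow> nat \<Rightarrow> nat" where
  "add_row_shape E lam = (\<lambda>r. if r = 0 then 0 else if r = 1 then E else lam (r - 1))"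

definition add_row_filling :: "nat \<Rightarrow> (nat \<times> nat \<Rightarrow> cell) \<Rightarrow> nat \<Rightarrow> nat \<times> nat \<Rightarrow> cell" where
  "add_row_filling E T b = (\<lambda>(r, c). if r = 0 then CE else if r = 1 then top_row E T b c else T (r - 1, c))"

definition top_beta :: "(nat \<times> nat \<Rightarrow> cell) \<Rightarrow> nat" where
  "top_beta T = (if \<exists>c. T (1, c) = CB then THE c. T (1, c) = CB else 0)"

lemma in_diag_lower_shape: "in_diag (lower_shape lam) r c \<longleftrightarrow> 1 \<le> r \<and> in_diag lam (Suc r) c"
  by (auto simp: in_diag_def lower_shape_def)

lemma in_diag_add_row_shape:
  "in_diag (add_row_shape E lam) r c \<longleftrightarrow> (r = 1 \<and> 1 \<le> c \<and> c \<le> E) \<or> (2 \<le> r \<and> in_diag lam (r - 1) c)"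
  by (auto simp: in_diag_def add_row_shape_def)

lemma top_row_eq_CB: "top_row E T b c = CB \<longleftrightarrow> b \<noteq> 0 \<and> c = b"
  by (simp add: top_row_def)

lemma cct_lower:
  assumes "cct (Suc k) lam T"
  shows "cct k (lower_shape lam) (lower_filling T)"
proof -
  have part: "partition_of_length (Suc k) lam" and filling: "cct_filling lam T"
    using assms by (simp_all add: cct_def)
  have "partition_of_length k (lower_shape lam)"
    using part by (auto simp: partition_of_length_def lower_shape_def)
  moreover have "cct_filling (lower_shape lam) (lower_filling T)"
  proof (rule cct_fillingI)
    fix r c assume "lower_filling T (r, c) \<noteq> CE"
    then show "in_diag (lower_shape lam) r c"
      using cct_filling_in_diag[OF filling, of "Suc r" c]
      by (cases "r = 0") (auto simp: lower_filling_def in_diag_lower_shape)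
  next
    fix r c c' assume "lower_filling T (r, c) = CB" "c' < c"
    then show "lower_filling T (r, c') = CE"
      using cct_filling_beta[OF filling] by (auto simp: lower_filling_def split: if_splits)
  next
    fix r c r' assume "lower_filling T (r, c) = CA" "r' < r"
    then show "lower_filling T (r', c) = CE"
      using cct_filling_alpha[OF filling] by (auto simp: lower_filling_def split: if_splits)
  next
    fix r c assume diag: "in_diag (lower_shape lam) r c"
      and no_alpha: "\<And>r'. r < r' \<Longrightarrow> lower_filling T (r', c) \<noteq> CA"
      and no_beta: "\<And>c'. c < c' \<Longrightarrow> lower_filling T (r, c') \<noteq> CB"
    have "T (r', c) \<noteq> CA" if "Suc r < r'" for r'
      using no_alpha[of "r' - 1"] that by (auto simp: lower_filling_def)
    moreover have "T (Suc r, c') \<noteq> CB" if "c < c'" for c'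
      using no_beta[OF that] diag by (auto simp: lower_filling_def in_diag_lower_shape)
    ultimately show "lower_filling T (r, c) \<noteq> CE"
      using cct_filling_cover[OF filling] diag by (auto simp: lower_filling_def in_diag_lower_shape)
  qed
  ultimately show ?thesis by (simp add: cct_def)
qed

lemma top_beta_eq:
  assumes "cct k lam T" "T (1, c) = CB"
  shows "top_beta T = c"
proof -
  have filling: "cct_filling lam T" using assms(1) by (simp add: cct_def)
  have "c' = c" if "T (1, c') = CB" for c'
    using cct_filling_beta[OF filling, of 1 c c'] cct_filling_beta[OF filling, of 1 c' c] that assms(2)
    by (cases c' c rule: linorder_cases) auto
  then have "(THE c. T (1, c) = CB) = c" using assms(2) by blast
  then show ?thesis using assms(2) by (auto simp: top_beta_def)
qed

lemma top_beta_cases: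
  assumes "cct k lam T"
  obtains "top_beta T = 0" "\<And>c. T (1, c) \<noteq> CB"
    | "top_beta T \<noteq> 0" "T (1, top_beta T) = CB"
proof (cases "\<exists>c. T (1, c) = CB")
  case True
  then obtain c where c: "T (1, c) = CB" by blast
  then have "c \<noteq> 0" using cct_filling_in_diag[of lam T 1 c] assms by (auto simp: cct_def in_diag_def)
  then show ?thesis using that(2) c top_beta_eq[OF assms c] by simp
next
  case False
  then show ?thesis using that(1) by (auto simp: top_beta_def)
qed

lemma free_columns_lower_filling:
  "c \<in> free_columns (lower_filling T) E \<longleftrightarrow> 1 \<le> c \<and> c \<le> E \<and> (\<forall>r > 1. T (r, c) \<noteq> CA)"
proof -
  have "(\<forall>r. lower_filling T (r, c) \<noteq> CA) \<longleftrightarrow> (\<forall>r > 1. T (r, c) \<noteq> CA)"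
    by (auto simp: lower_filling_def) (metis Suc_lessE less_numeral_extra(4))
  then show ?thesis by (simp add: free_columns_def)
qed

lemma cct_top_row_free:
  assumes "cct k lam T" "T (1, c) \<noteq> CE"
  shows "c \<in> free_columns (lower_filling T) (lam 1)"
proof -
  have filling: "cct_filling lam T" using assms(1) by (simp add: cct_def)
  show ?thesis
    using cct_filling_in_diag[OF filling assms(2)] cct_filling_alpha[OF filling, of _ c 1] assms(2)
    by (auto simp: free_columns_lower_filling in_diag_def)
qed

lemma cct_top_row:
  assumes "cct k lam T"
  shows "T (1, c) = top_row (lam 1) (lower_filling T) (top_beta T) c"
proof -
  have filling: "cct_filling lam T" using assms by (simp add: cct_def)
  let ?E = "lam 1" and ?b = "top_beta T" and ?T' = "lower_filling T"
  show ?thesis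
  proof (cases "T (1, c)")
    case CB
    then show ?thesis
      using top_beta_eq[OF assms CB] cct_filling_in_diag[OF filling, of 1 c]
      by (simp add: top_row_def in_diag_def)
  next
    case CA
    have "?b < c"
    proof (cases rule: top_beta_cases[OF assms])
      case 1
      then show ?thesis using cct_filling_in_diag[OF filling, of 1 c] CA by (simp add: in_diag_def)
    next
      case 2
      then show ?thesis using cct_filling_beta[OF filling, of 1 ?b c] CA
        by (cases c ?b rule: linorder_cases) auto
    qed
    then show ?thesis using CA cct_top_row_free[OF assms, of c] by (simp add: top_row_def)
  next
    case CE
    have "\<not> (c \<in> free_columns ?T' ?E \<and> ?b < c)"
    proof
      assume free: "c \<in> free_columns ?T' ?E \<and> ?b < c"
      have "T (1, c') \<noteq> CB" if "c < c'" for c'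
        using top_beta_eq[OF assms, of c'] free that by auto
      then have "T (1, c) \<noteq> CE"
        using cct_filling_cover[OF filling, of 1 c] free
        by (auto simp: free_columns_lower_filling in_diag_def)
      then show False using CE by simp
    qed
    moreover have "\<not> (?b \<noteq> 0 \<and> c = ?b)"
      using CE by (cases rule: top_beta_cases[OF assms]) auto
    ultimately show ?thesis using CE by (simp add: top_row_def)
  qed
qed

lemma cct_decompose:
  assumes "cct (Suc k) lam T"
  shows "lower_shape lam 1 \<le> lam 1"
    and "add_row_shape (lam 1) (lower_shape lam) = lam"
    and "top_beta T \<in> insert 0 (free_columns (lower_filling T) (lam 1))"
    and "add_row_filling (lam 1) (lower_filling T) (top_beta T) = T"
proof -
  have part: "partition_of_length (Suc k) lam" and filling: "cct_filling lam T"
    using assms by (simp_all add: cct_def)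
  show "lower_shape lam 1 \<le> lam 1"
    using partition_of_length_le_first[OF part, of "Suc 1"] by (simp add: lower_shape_def)
  show "add_row_shape (lam 1) (lower_shape lam) = lam"
    using partition_of_length_eq_0[OF part, of 0] by (auto simp: add_row_shape_def lower_shape_def)
  show "top_beta T \<in> insert 0 (free_columns (lower_filling T) (lam 1))"
    by (cases rule: top_beta_cases[OF assms]) (use cct_top_row_free[OF assms] in auto)
  show "add_row_filling (lam 1) (lower_filling T) (top_beta T) = T"
    using cct_filling_row_0[OF filling] cct_top_row[OF assms]
    by (auto simp: fun_eq_iff add_row_filling_def lower_filling_def)
qed

lemma partition_of_length_add_row:
  assumes part: "partition_of_length k lam" and "lam 1 \<le> E" "1 \<le> E"
  shows "partition_of_length (Suc k) (add_row_shape E lam)"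
  unfolding partition_of_length_def
proof (intro conjI allI impI)
  fix r
  show "add_row_shape E lam r = 0 \<longleftrightarrow> r = 0 \<or> Suc k < r"
    using part assms(3) by (cases "r \<le> 1") (auto simp: add_row_shape_def partition_of_length_def)
  assume "1 \<le> r \<and> r < Suc k"
  then show "add_row_shape E lam (Suc r) \<le> add_row_shape E lam r"
    using partition_of_length_decreasing[OF part, of "r - 1"] assms(2)
    by (cases "r = 1") (auto simp: add_row_shape_def)
qed

lemma add_row_filling_cover:
  assumes filling: "cct_filling lam T" and diag: "in_diag (add_row_shape E lam) r c"
    and no_alpha: "\<And>r'. r < r' \<Longrightarrow> add_row_filling E T b (r', c) \<noteq> CA"
    and no_beta: "\<And>c'. c < c' \<Longrightarrow> add_row_filling E T b (r, c') \<noteq> CB"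
  shows "add_row_filling E T b (r, c) \<noteq> CE"
proof -
  have row_Suc: "add_row_filling E T b (Suc r, c) = T (r, c)" if "r \<noteq> 0" for r c
    using that by (simp add: add_row_filling_def)
  consider "r = 1" "1 \<le> c" "c \<le> E" | "2 \<le> r" "in_diag lam (r - 1) c"
    using diag by (auto simp: in_diag_add_row_shape)
  then show ?thesis
  proof cases
    case 1
    have "T (r', c) \<noteq> CA" for r'
      using no_alpha[of "Suc r'"] 1 cct_filling_row_0[OF filling, of c]
      by (cases "r' = 0") (auto simp: row_Suc)
    then have "c \<in> free_columns T E" using 1 by (simp add: free_columns_def)
    moreover have "\<not> (b \<noteq> 0 \<and> c < b)"
      using no_beta[of b] 1 by (auto simp: add_row_filling_def top_row_eq_CB)
    ultimately show ?thesis using 1 by (auto simp: add_row_filling_def top_row_def)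
  next
    case 2
    have "T (r', c) \<noteq> CA" if "r - 1 < r'" for r'
      using no_alpha[of "Suc r'"] that 2 by (simp add: row_Suc)
    moreover have "T (r - 1, c') \<noteq> CB" if "c < c'" for c'
      using no_beta[OF that] 2 by (simp add: add_row_filling_def)
    ultimately show ?thesis
      using cct_filling_cover[OF filling 2(2)] 2 by (simp add: add_row_filling_def)
  qed
qed

lemma cct_filling_add_row:
  assumes filling: "cct_filling lam T" and b: "b \<in> insert 0 (free_columns T E)"
  shows "cct_filling (add_row_shape E lam) (add_row_filling E T b)"
proof -
  let ?T = "add_row_filling E T b"
  have b_free: "b \<noteq> 0 \<Longrightarrow> 1 \<le> b \<and> b \<le> E \<and> (\<forall>r. T (r, b) \<noteq> CA)"
    using b by (auto simp: free_columns_def)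
  show ?thesis
  proof (rule cct_fillingI)
    fix r c assume "?T (r, c) \<noteq> CE"
    then show "in_diag (add_row_shape E lam) r c"
      using cct_filling_in_diag[OF filling, of "r - 1" c] b_free
      by (auto simp: in_diag_add_row_shape add_row_filling_def top_row_def free_columns_def
          split: if_splits)
  next
    fix r c c' assume "?T (r, c) = CB" "c' < c"
    then show "?T (r, c') = CE"
      using cct_filling_beta[OF filling, of "r - 1" c c']
      by (auto simp: add_row_filling_def top_row_def split: if_splits)
  next
    fix r c r' assume alpha: "?T (r, c) = CA" and "r' < r"
    then consider "r' = 0" | "r' = 1" "T (r - 1, c) = CA" | "2 \<le> r'" "T (r - 1, c) = CA"
      by (cases "r' = 0"; cases "r' = 1") (auto simp: add_row_filling_def)
    then show "?T (r', c) = CE"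
    proof cases
      case 2
      then have "c \<noteq> b \<or> b = 0" "c \<notin> free_columns T E"
        using b_free by (auto simp: free_columns_def)
      then show ?thesis using 2 by (auto simp: add_row_filling_def top_row_def)
    next
      case 3
      then show ?thesis using cct_filling_alpha[OF filling, of "r - 1" c "r' - 1"] \<open>r' < r\<close>
        by (simp add: add_row_filling_def)
    qed (simp add: add_row_filling_def)
  qed (rule add_row_filling_cover[OF filling])
qed

lemma cct_add_row:
  assumes "cct k lam T" "lam 1 \<le> E" "1 \<le> E" "b \<in> insert 0 (free_columns T E)"
  shows "cct (Suc k) (add_row_shape E lam) (add_row_filling E T b)"
  using assms partition_of_length_add_row cct_filling_add_row by (simp add: cct_def)

lemma lower_add_row:
  assumes "cct k lam T"
  shows "lower_shape (add_row_shape E lam) = lam" and "lower_filling (add_row_filling E T b) = T"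
  using assms partition_of_length_eq_0[of k lam 0] cct_filling_row_0[of lam T]
  by (auto simp: cct_def fun_eq_iff lower_shape_def add_row_shape_def lower_filling_def
      add_row_filling_def)

lemma top_beta_add_row: "top_beta (add_row_filling E T b) = b"
proof -
  have "add_row_filling E T b (1, c) = CB \<longleftrightarrow> b \<noteq> 0 \<and> c = b" for c
    by (simp add: add_row_filling_def top_row_eq_CB)
  then show ?thesis by (auto simp: top_beta_def)
qed

lemma finite_cells:
  assumes "cct k lam T" "x \<noteq> CE"
  shows "finite {p. T p = x}"
proof (rule finite_subset)
  show "{p. T p = x} \<subseteq> {1..k} \<times> {1..lam 1}"
    using cct_bounds[OF assms(1)] assms(2) by fastforce
qed simp

lemma num_cell_add_row:
  assumes "cct k lam T" "x \<noteq> CE"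
  shows "num_cell x (add_row_filling E T b) = card {c. top_row E T b c = x} + num_cell x T"
proof -
  have row_0: "T (0, c) = CE" for c using assms(1) cct_filling_row_0 unfolding cct_def by blast
  define top where "top = {c. top_row E T b c = x}"
  define shift :: "nat \<times> nat \<Rightarrow> nat \<times> nat" where "shift = (\<lambda>(r, c). (Suc r, c))"
  have shift_iff: "(r, c) \<in> shift ` {p. T p = x} \<longleftrightarrow> r \<noteq> 0 \<and> T (r - 1, c) = x" for r c
    by (cases r) (auto simp: shift_def image_iff)
  have "{p. add_row_filling E T b p = x} = Pair 1 ` top \<union> shift ` {p. T p = x}"
  proof (rule set_eqI)
    fix p :: "nat \<times> nat"
    obtain r c where p: "p = (r, c)" by (cases p)
    show "p \<in> {p. add_row_filling E T b p = x} \<longleftrightarrow> p \<in> Pair 1 ` top \<union> shift ` {p. T p = x}"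
      unfolding p Un_iff shift_iff using row_0 assms(2)
      by (simp add: add_row_filling_def top_def image_iff)
  qed
  moreover have "top \<subseteq> insert b {..E}"
    using assms(2) by (auto simp: top_def top_row_def free_columns_def split: if_splits)
  then have "finite top" by (rule finite_subset) simp
  moreover have "Pair 1 ` top \<inter> shift ` {p. T p = x} = {}"
    using row_0 assms(2) by (auto simp: shift_def)
  ultimately have "num_cell x (add_row_filling E T b) =
      card (Pair (1::nat) ` top) + card (shift ` {p. T p = x})"
    using finite_cells[OF assms] by (simp add: num_cell_def card_Un_disjoint)
  also have "\<dots> = card top + num_cell x T"
    by (simp add: card_image inj_on_def shift_def num_cell_def)
  finally show ?thesis by (simp add: top_def)
qed

lemma card_free_columns:
  assumes "cct k lam T" "lam 1 \<le> E"
  shows "num_cell CA T + card (free_columns T E) = E"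
proof -
  have filling: "cct_filling lam T" using assms(1) by (simp add: cct_def)
  let ?A = "{p. T p = CA}"
  have "inj_on snd ?A"
  proof (rule inj_onI)
    fix p q assume "p \<in> ?A" "q \<in> ?A" "snd p = snd q"
    moreover obtain r c r' where "p = (r, c)" "q = (r', c)"
      using \<open>snd p = snd q\<close> by (metis prod.collapse)
    ultimately show "p = q"
      using cct_filling_alpha[OF filling, of r c r'] cct_filling_alpha[OF filling, of r' c r]
      by (cases r r' rule: linorder_cases) auto
  qed
  then have "card (snd ` ?A) = num_cell CA T"
    by (simp add: card_image num_cell_def)
  moreover have "snd ` ?A \<union> free_columns T E = {1..E}"
  proof (intro equalityI subsetI)
    fix c assume "c \<in> snd ` ?A \<union> free_columns T E"
    then consider r where "T (r, c) = CA" | "c \<in> free_columns T E" by force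
    then show "c \<in> {1..E}"
    proof cases
      case (1 r)
      then show ?thesis using cct_bounds[OF assms(1), of r c] assms(2) by simp
    qed (simp add: free_columns_def)
  next
    fix c assume "c \<in> {1..E}"
    then show "c \<in> snd ` ?A \<union> free_columns T E"
      by (cases "\<exists>r. T (r, c) = CA") (auto simp: free_columns_def image_iff)
  qed
  moreover have "snd ` ?A \<inter> free_columns T E = {}"
    by (auto simp: free_columns_def)
  moreover have "finite (snd ` ?A)" "finite (free_columns T E)"
    using finite_cells[OF assms(1)] by (auto simp: free_columns_def)
  ultimately show ?thesis by (metis card_Un_disjoint card_atLeastAtMost diff_Suc_1)
qed

lemma bij_betw_card_greater:
  fixes L :: "nat set"
  assumes "finite L" "0 \<notin> L"
  shows "bij_betw (\<lambda>b. card {c \<in> L. b < c}) (insert 0 L) {0..card L}"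
proof -
  let ?d = "\<lambda>b. card {c \<in> L. b < c}"
  have less: "?d b' < ?d b" if "b < b'" "b' \<in> L" for b b'
    using that assms(1) by (intro psubset_card_mono) auto
  have "inj_on ?d (insert 0 L)"
  proof (rule inj_onI)
    fix b b' assume "b \<in> insert 0 L" "b' \<in> insert 0 L" "?d b = ?d b'"
    then show "b = b'"
      using less[of b b'] less[of b' b] by (cases b b' rule: linorder_cases) auto
  qed
  moreover have "?d ` insert 0 L \<subseteq> {0..card L}"
    using assms(1) by (auto intro: card_mono)
  moreover have "card (?d ` insert 0 L) = card {0..card L}"
    using card_image[OF \<open>inj_on ?d (insert 0 L)\<close>] assms by simp
  ultimately show ?thesis
    by (simp add: bij_betw_def card_subset_eq)
qed

definition cct_set :: "nat \<Rightarrow> nat \<Rightarrow> ((nat \<Rightarrow> nat) \<times> (nat \<times> nat \<Rightarrow> cell)) set" where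
  "cct_set k E = {(lam, T). cct k lam T \<and> lam 1 \<le> E}"

definition cct_beta_sum :: "real \<Rightarrow> nat \<Rightarrow> nat \<Rightarrow> nat \<Rightarrow> real" where
  "cct_beta_sum \<beta> k E J =
     (\<Sum>(lam, T) \<in> {(lam, T). cct k lam T \<and> lam 1 = E \<and> num_cell CA T = J}. \<beta> ^ num_cell CB T)"

lemma finite_cct_set: "finite (cct_set k E)"
proof -
  let ?shapes = "{lam :: nat \<Rightarrow> nat. \<forall>r. (r \<in> {1..k} \<longrightarrow> lam r \<in> {0..E})
      \<and> (r \<notin> {1..k} \<longrightarrow> lam r = 0)}"
  let ?fillings = "{T :: nat \<times> nat \<Rightarrow> cell. \<forall>p. (p \<in> {1..k} \<times> {1..E} \<longrightarrow> T p \<in> {CA, CB, CE})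
      \<and> (p \<notin> {1..k} \<times> {1..E} \<longrightarrow> T p = CE)}"
  have "finite ?shapes" "finite ?fillings"
    by (rule finite_set_of_finite_funs; simp)+
  moreover have "cct_set k E \<subseteq> ?shapes \<times> ?fillings"
  proof clarify
    fix lam T assume "(lam, T) \<in> cct_set k E"
    then have cct: "cct k lam T" and "lam 1 \<le> E" by (simp_all add: cct_set_def)
    then have part: "partition_of_length k lam" by (simp add: cct_def)
    have "lam r \<le> E" for r using partition_of_length_le_first[OF part, of r] \<open>lam 1 \<le> E\<close> by simp
    moreover have "lam r = 0" if "r \<notin> {1..k}" for r
      using that partition_of_length_eq_0[OF part, of r] by auto
    moreover have "T p = CE" if "p \<notin> {1..k} \<times> {1..E}" for p
      using that cct_bounds[OF cct, of "fst p" "snd p"] \<open>lam 1 \<le> E\<close> by (cases p) fastforce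
    moreover have "T p \<in> {CA, CB, CE}" for p by (cases "T p") simp_all
    ultimately show "lam \<in> ?shapes \<and> T \<in> ?fillings" by simp
  qed
  ultimately show ?thesis by (meson finite_SigmaI finite_subset)
qed

definition top_choices :: "nat \<Rightarrow> nat \<Rightarrow> (nat \<times> nat \<Rightarrow> cell) \<Rightarrow> nat set" where
  "top_choices E J T = {b \<in> insert 0 (free_columns T E). num_cell CA (add_row_filling E T b) = J}"

lemma sum_top_choices:
  assumes "cct k lam T" "lam 1 \<le> E"
  shows "(\<Sum>b \<in> top_choices E J T. \<beta> ^ num_cell CB (add_row_filling E T b))
       = (if num_cell CA T \<le> J \<and> J \<le> E then \<beta> ^ (num_cell CB T + (if J < E then 1 else 0)) else 0)"
proof -
  let ?L = "free_columns T E"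
  let ?d = "\<lambda>b. card {c \<in> ?L. b < c}" and ?n = "card ?L"
  have fin: "finite ?L" and "0 \<notin> ?L" by (simp_all add: free_columns_def)
  note bij = bij_betw_card_greater[OF this]
  have E: "num_cell CA T + ?n = E" by (rule card_free_columns[OF assms])
  have d_eq_n: "?d b = ?n \<longleftrightarrow> b = 0" if "b \<in> insert 0 ?L" for b
  proof (cases "b = 0")
    case True
    then have "{c \<in> ?L. b < c} = ?L" using \<open>0 \<notin> ?L\<close> by (auto intro: gr0I)
    then show ?thesis using True by simp
  next
    case False
    then have "{c \<in> ?L. b < c} \<subset> ?L" using that by auto
    from psubset_card_mono[OF fin this] show ?thesis using False by simp
  qed
  have "{c. top_row E T b c = CA} = {c \<in> ?L. b < c}" for b
    by (auto simp: top_row_def)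
  moreover have "card {c. top_row E T b c = CB} = (if b = 0 then 0 else 1)" for b
    by (simp add: top_row_eq_CB)
  ultimately have counts: "num_cell CA (add_row_filling E T b) = num_cell CA T + ?d b"
    "num_cell CB (add_row_filling E T b) = num_cell CB T + (if b = 0 then 0 else 1)" for b
    using num_cell_add_row[OF assms(1)] by simp_all
  let ?g = "\<lambda>i. if num_cell CA T + i = J then \<beta> ^ (num_cell CB T + (if i = ?n then 0 else 1)) else 0"
  have "(\<Sum>b \<in> top_choices E J T. \<beta> ^ num_cell CB (add_row_filling E T b))
      = (\<Sum>b\<in>insert 0 ?L. if num_cell CA T + ?d b = J
            then \<beta> ^ (num_cell CB T + (if b = 0 then 0 else 1)) else 0)"
    unfolding top_choices_def counts using fin by (intro sum.inter_filter) simp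
  also have "\<dots> = (\<Sum>b\<in>insert 0 ?L. ?g (?d b))"
    by (rule sum.cong) (simp_all add: d_eq_n)
  also have "\<dots> = (\<Sum>i\<in>{0..?n}. ?g i)"
    by (rule sum.reindex_bij_betw[OF bij])
  also have "\<dots> = (\<Sum>i\<in>{0..?n}. if i = J - num_cell CA T then
      (if num_cell CA T \<le> J then \<beta> ^ (num_cell CB T + (if i = ?n then 0 else 1)) else 0) else 0)"
    by (rule sum.cong) auto
  also have "\<dots> = (if num_cell CA T \<le> J \<and> J \<le> E then \<beta> ^ (num_cell CB T + (if J < E then 1 else 0)) else 0)"
    using E by (subst sum.delta) auto
  finally show ?thesis .
qed

lemma cct_beta_sum_Suc_add_row:
  assumes "1 \<le> E"
  shows "cct_beta_sum \<beta> (Suc k) E J = (\<Sum>((lam, T), b) \<in> Sigma (cct_set k E) (\<lambda>(lam, T). top_choices E J T).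
      \<beta> ^ num_cell CB (add_row_filling E T b))"
proof -
  let ?add = "\<lambda>((lam, T), b). (add_row_shape E lam, add_row_filling E T b)"
  let ?remove = "\<lambda>(lam, T). ((lower_shape lam, lower_filling T), top_beta T)"
  let ?h = "\<lambda>((lam, T), b). \<beta> ^ num_cell CB (add_row_filling E T b)"
  show ?thesis
    unfolding cct_beta_sum_def
  proof (rule sum.reindex_bij_witness[where i = ?add and j = ?remove])
    fix x assume "x \<in> {(lam, T). cct (Suc k) lam T \<and> lam 1 = E \<and> num_cell CA T = J}"
    then obtain lam T where x: "x = (lam, T)" and cct: "cct (Suc k) lam T"
      and E: "lam 1 = E" and J: "num_cell CA T = J" by blast
    note decomp = cct_decompose[OF cct, unfolded E]
    show "?add (?remove x) = x" using x decomp by simp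
    show "?remove x \<in> Sigma (cct_set k E) (\<lambda>(lam, T). top_choices E J T)"
      using x decomp J cct_lower[OF cct] by (simp add: cct_set_def top_choices_def)
    show "?h (?remove x) = (case x of (lam, T) \<Rightarrow> \<beta> ^ num_cell CB T)"
      using x decomp by simp
  next
    fix y assume "y \<in> Sigma (cct_set k E) (\<lambda>(lam, T). top_choices E J T)"
    then obtain lam T b where y: "y = ((lam, T), b)" and cct: "cct k lam T" and le: "lam 1 \<le> E"
      and b: "b \<in> insert 0 (free_columns T E)" and J: "num_cell CA (add_row_filling E T b) = J"
      by (auto simp: cct_set_def top_choices_def)
    show "?remove (?add y) = y"
      using y lower_add_row[OF cct] top_beta_add_row by simp
    show "?add y \<in> {(lam, T). cct (Suc k) lam T \<and> lam 1 = E \<and> num_cell CA T = J}"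
      using y cct_add_row[OF cct le assms b] J by (simp add: add_row_shape_def)
  qed
qed

lemma cct_beta_sum_Suc:
  assumes "1 \<le> E"
  shows "cct_beta_sum \<beta> (Suc k) E J = (if J \<le> E then \<beta> ^ (if J < E then 1 else 0) *
     (\<Sum>(lam, T) \<in> cct_set k E. if num_cell CA T \<le> J then \<beta> ^ num_cell CB T else 0) else 0)"
proof -
  have "\<forall>x \<in> cct_set k E. finite ((\<lambda>(lam, T). top_choices E J T) x)"
    by (auto simp: top_choices_def free_columns_def)
  from sum.Sigma[OF finite_cct_set this,
      of "\<lambda>(lam, T) b. \<beta> ^ num_cell CB (add_row_filling E T b)", symmetric]
  have "cct_beta_sum \<beta> (Suc k) E J =
      (\<Sum>(lam, T) \<in> cct_set k E. \<Sum>b \<in> top_choices E J T. \<beta> ^ num_cell CB (add_row_filling E T b))"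
    by (simp add: cct_beta_sum_Suc_add_row[OF assms] split_def)
  also have "\<dots> = (\<Sum>(lam, T) \<in> cct_set k E. if num_cell CA T \<le> J \<and> J \<le> E
      then \<beta> ^ (num_cell CB T + (if J < E then 1 else 0)) else 0)"
    by (rule sum.cong) (auto simp: cct_set_def sum_top_choices)
  finally show ?thesis
    by (auto simp: sum_distrib_left split_def intro!: sum.cong)
qed

lemma cct_beta_sum_0: "cct_beta_sum \<beta> 0 E J = (if E = 0 \<and> J = 0 then 1 else 0)"
proof -
  let ?empty = "((\<lambda>_. 0) :: nat \<Rightarrow> nat, (\<lambda>_. CE) :: nat \<times> nat \<Rightarrow> cell)"
  have "cct 0 lam T \<longleftrightarrow> (lam, T) = ?empty" for lam T
  proof
    assume cct: "cct 0 lam T"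
    then have "lam = (\<lambda>_. 0)" by (auto simp: cct_def partition_of_length_def)
    moreover from this have "T = (\<lambda>_. CE)"
      using cct cct_filling_in_diag by (fastforce simp: cct_def in_diag_def)
    ultimately show "(lam, T) = ?empty" by simp
  next
    assume "(lam, T) = ?empty"
    then show "cct 0 lam T"
      by (auto simp: cct_def partition_of_length_def in_diag_def intro: cct_fillingI)
  qed
  moreover have "num_cell CA (\<lambda>_. CE) = 0" "num_cell CB (\<lambda>_. CE) = 0"
    by (simp_all add: num_cell_def)
  ultimately have "{(lam, T). cct 0 lam T \<and> lam 1 = E \<and> num_cell CA T = J} =
      (if E = 0 \<and> J = 0 then {?empty} else {})"
    by auto
  then show ?thesis by (simp add: cct_beta_sum_def \<open>num_cell CB (\<lambda>_. CE) = 0\<close>)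
qed

lemma cct_beta_sum_Suc_0: "cct_beta_sum \<beta> (Suc k) 0 J = 0"
proof -
  have "lam 1 \<noteq> 0" if "cct (Suc k) lam T" for lam T
    using that partition_of_length_pos[of "Suc k" lam 1] by (simp add: cct_def)
  then have "{(lam, T). cct (Suc k) lam T \<and> lam 1 = 0 \<and> num_cell CA T = J} = {}" by auto
  then show ?thesis unfolding cct_beta_sum_def by (simp only: sum.empty)
qed

lemma sum_cct_set_eq_prefix_sum:
  "(\<Sum>(lam, T) \<in> cct_set k E. if num_cell CA T \<le> J then \<beta> ^ num_cell CB T else 0)
     = (\<Sum>E'\<le>E. \<Sum>J'\<le>J. cct_beta_sum \<beta> k E' J')"
proof -
  let ?S = "{x \<in> cct_set k E. num_cell CA (snd x) \<le> J}"
  let ?f = "\<lambda>x. \<beta> ^ num_cell CB (snd x)"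
  let ?g = "\<lambda>x. (fst x 1, num_cell CA (snd x))"
  have "(\<Sum>(lam, T) \<in> cct_set k E. if num_cell CA T \<le> J then \<beta> ^ num_cell CB T else 0) = sum ?f ?S"
    using finite_cct_set by (simp add: sum.inter_filter split_def)
  also have "\<dots> = (\<Sum>y \<in> {..E} \<times> {..J}. \<Sum>x \<in> {x \<in> ?S. ?g x = y}. ?f x)"
    using finite_cct_set by (intro sum.group[symmetric]) (auto simp: cct_set_def)
  also have "\<dots> = (\<Sum>y \<in> {..E} \<times> {..J}. cct_beta_sum \<beta> k (fst y) (snd y))"
  proof (rule sum.cong[OF refl])
    fix y assume "y \<in> {..E} \<times> {..J}"
    then have "{x \<in> ?S. ?g x = y} = {(lam, T). cct k lam T \<and> lam 1 = fst y \<and> num_cell CA T = snd y}"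
      by (auto simp: cct_set_def)
    then show "(\<Sum>x \<in> {x \<in> ?S. ?g x = y}. ?f x) = cct_beta_sum \<beta> k (fst y) (snd y)"
      by (simp add: cct_beta_sum_def split_def)
  qed
  also have "\<dots> = (\<Sum>E'\<le>E. \<Sum>J'\<le>J. cct_beta_sum \<beta> k E' J')"
    by (simp add: sum.cartesian_product split_def)
  finally show ?thesis .
qed

lemma cct_beta_sum_eq_beta_poly: "cct_beta_sum \<beta> k E J = beta_poly \<beta> k E J"
proof (induction k arbitrary: E J)
  case 0
  then show ?case by (simp add: cct_beta_sum_0)
next
  case (Suc k)
  then show ?case
    by (cases E) (simp_all add: cct_beta_sum_Suc_0 cct_beta_sum_Suc sum_cct_set_eq_prefix_sum)
qed

lemma Nprime_eq_sum_cct_beta_sum: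
  assumes "1 \<le> k"
  shows "Nprime m k \<alpha> \<beta> = \<alpha> ^ k * \<beta> ^ m * (\<Sum>J\<le>m. \<alpha> ^ J * cct_beta_sum \<beta> k m J)"
proof -
  let ?S = "{(lam, T). cct k lam T \<and> lam 1 = m}"
  let ?NA = "\<lambda>x. num_cell CA (snd x)"
  have "{(lam, T). is_cct k (k + m) lam T \<and> lam 1 = m \<and> 1 \<le> lam k} = ?S"
    unfolding is_cct_iff cct_def using is_partition_iff[OF assms, of "k + m"] by auto
  then have "Nprime m k \<alpha> \<beta> = (\<Sum>x\<in>?S. cct_wt k (k + m) \<alpha> \<beta> (snd x))"
    by (simp add: Nprime_def split_def)
  also have "\<dots> = (\<Sum>J\<le>m. \<Sum>x \<in> {x \<in> ?S. ?NA x = J}. cct_wt k (k + m) \<alpha> \<beta> (snd x))"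
  proof (rule sum.group[symmetric])
    show "finite ?S"
      by (rule finite_subset[OF _ finite_cct_set[of k m]]) (auto simp: cct_set_def)
    show "?NA ` ?S \<subseteq> {..m}"
    proof
      fix y assume "y \<in> ?NA ` ?S"
      then obtain lam T where "cct k lam T" "lam 1 = m" "y = num_cell CA T" by auto
      then show "y \<in> {..m}" using card_free_columns[of k lam T m] by simp
    qed
  qed simp
  also have "\<dots> = (\<Sum>J\<le>m. \<alpha> ^ k * \<beta> ^ m * (\<alpha> ^ J * cct_beta_sum \<beta> k m J))"
  proof (rule sum.cong[OF refl])
    fix J
    have "{x \<in> ?S. ?NA x = J} = {(lam, T). cct k lam T \<and> lam 1 = m \<and> num_cell CA T = J}" by auto
    then show "(\<Sum>x \<in> {x \<in> ?S. ?NA x = J}. cct_wt k (k + m) \<alpha> \<beta> (snd x))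
        = \<alpha> ^ k * \<beta> ^ m * (\<alpha> ^ J * cct_beta_sum \<beta> k m J)"
      by (simp add: cct_beta_sum_def cct_wt_def sum_distrib_left split_def power_add mult_ac)
  qed
  finally show ?thesis by (simp add: sum_distrib_left)
qed

theorem theorem6p1:
  fixes m k :: nat and \<alpha> \<beta> :: real
  assumes "1 \<le> m" and "1 \<le> k"
  shows "Nprime m k \<alpha> \<beta> =
    \<alpha> ^ k * \<beta> ^ m *
    (\<Sum>l = 0..k. \<Sum>j = 0..m. \<alpha> ^ j * \<beta> ^ l *
      ((real_of_int (int m + int l - 2 + kdelta j m) gchoose (m - 1)) *
       (real_of_int (int k + int j - 2 + kdelta l k) gchoose (k - 1))
     - (real_of_int (int m + int l - 2 + kdelta j m) gchoose m) *
       (real_of_int (int k + int j - 2 + kdelta l k) gchoose k)))"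
proof -
  have "Nprime m k \<alpha> \<beta> = \<alpha> ^ k * \<beta> ^ m * (\<Sum>j\<le>m. \<alpha> ^ j * beta_poly \<beta> k m j)"
    using Nprime_eq_sum_cct_beta_sum[OF assms(2)] by (simp add: cct_beta_sum_eq_beta_poly)
  also have "(\<Sum>j\<le>m. \<alpha> ^ j * beta_poly \<beta> k m j) = (\<Sum>j\<le>m. \<Sum>l\<le>k. \<alpha> ^ j * \<beta> ^ l *
      ((real_of_int (int m + int l - 2 + kdelta j m) gchoose (m - 1)) *
       (real_of_int (int k + int j - 2 + kdelta l k) gchoose (k - 1))
     - (real_of_int (int m + int l - 2 + kdelta j m) gchoose m) *
       (real_of_int (int k + int j - 2 + kdelta l k) gchoose k)))"
    by (intro sum.cong refl)
      (simp add: beta_poly_closed_form[OF assms(2,1)] sum_distrib_left mult.assoc)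
  finally show ?thesis
    by (subst (asm) sum.swap) (simp add: atLeast0AtMost)
qed

end
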